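(* Let $A\subseteq\Omega$ be arbitrary. Then: (i) for each $\varepsilon>0$ there exists a $\mathcal{P}$-e-process $(E^\varepsilon_t)_{t\in\mathbb{N}_0}$ such that $\lim_{t\to\infty}E^\varepsilon_t = 1/(\mu^*(A)+\varepsilon)$ at every point of $A$; (ii) for any $c\in[1,\infty]$, if there exists a $\mathcal{P}$-e-process $(E_t)_{t\in\mathbb{N}_0}$ such that $\sup_{t\in\mathbb{N}_0}E_t\ge c$ at every point of $A$, then $\mu^*(A)\le 1/c$ (with $1/\infty=0$).
   Context: Standing setup: $(\Omega, (\mathcal{F}_t)_{t\in\mathbb{N}_0}, \mathcal{F})$ is a filtered measurable space with $\mathcal{F} = \sigma\big(\bigcup_{t} \mathcal{F}_t\big)$. A stopping time is a map $\tau:\Omega\to\mathbb{N}_0\cup\{\infty\}$ with $\{\tau \le t\}\in\mathcal{F}_t$ for all $t$; $\mathcal{T}$ denotes the set of all stopping times. $\mathcal{P}$ is an arbitrary family of probability measures on $\mathcal{F}$. The inverse-capital measure is defined for every $A\subseteq\Omega$ by $\mu^*(A) = \inf_{\tau\in\mathcal{T}:\, A\subseteq\{\tau<\infty\}} \sup_{\mathbb{P}\in\mathcal{P}} \mathbb{P}(\tau<\infty)$. A $\mathcal{P}$-e-process is a nonnegative (possibly $[0,\infty]$-valued) process $(E_t)_{t\in\mathbb{N}_0}$ adapted to $(\mathcal{F}_t)$ such that $\mathbb{E}_{\mathbb{P}}[E_\tau]\le 1$ for every $\mathbb{P}\in\mathcal{P}$ and every $\tau\in\mathcal{T}$, with the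 convention $E_\infty=\limsup_{t\to\infty}E_t$. *)

theory Defs
  imports "HOL-Probability.Probability"
begin

text \<open>Omega is the universe of the type 'a. A filtration is Fs :: nat => 'a set set,
  an increasing family of sigma-algebras on UNIV; the terminal sigma-algebra is generated
  by the union.\<close>

definition filtration_on :: "(nat \<Rightarrow> 'a set set) \<Rightarrow> bool" where
  "filtration_on Fs \<longleftrightarrow> (\<forall>t. sigma_algebra UNIV (Fs t)) \<and> (\<forall>s t. s \<le> t \<longrightarrow> Fs s \<subseteq> Fs t)"

definition F_inf :: "(nat \<Rightarrow> 'a set set) \<Rightarrow> 'a set set" where
  "F_inf Fs = sigma_sets UNIV (\<Union>t. Fs t)"

definition prob_family :: "(nat \<Rightarrow> 'a set set) \<Rightarrow> 'a measure set \<Rightarrow> bool" where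
  "prob_family Fs Ps \<longleftrightarrow> (\<forall>P\<in>Ps. prob_space P \<and> space P = UNIV \<and> sets P = F_inf Fs)"

definition stopping_time_on :: "(nat \<Rightarrow> 'a set set) \<Rightarrow> ('a \<Rightarrow> enat) \<Rightarrow> bool" where
  "stopping_time_on Fs \<tau> \<longleftrightarrow> (\<forall>t::nat. {\<omega>. \<tau> \<omega> \<le> enat t} \<in> Fs t)"

definition inverse_capital :: "(nat \<Rightarrow> 'a set set) \<Rightarrow> 'a measure set \<Rightarrow> 'a set \<Rightarrow> ennreal" where
  "inverse_capital Fs Ps A =
     (INF \<tau>\<in>{\<tau>. stopping_time_on Fs \<tau> \<and> A \<subseteq> {\<omega>. \<tau> \<omega> < \<infinity>}}.
        (SUP P\<in>Ps. emeasure P {\<omega>. \<tau> \<omega> < \<infinity>}))"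

definition stopped_value :: "(nat \<Rightarrow> 'a \<Rightarrow> ennreal) \<Rightarrow> ('a \<Rightarrow> enat) \<Rightarrow> 'a \<Rightarrow> ennreal" where
  "stopped_value E \<tau> \<omega> = (case \<tau> \<omega> of enat t \<Rightarrow> E t \<omega> | \<infinity> \<Rightarrow> limsup (\<lambda>t. E t \<omega>))"

definition adapted_to :: "(nat \<Rightarrow> 'a set set) \<Rightarrow> (nat \<Rightarrow> 'a \<Rightarrow> ennreal) \<Rightarrow> bool" where
  "adapted_to Fs E \<longleftrightarrow> (\<forall>t. E t \<in> borel_measurable (sigma UNIV (Fs t)))"

definition e_process :: "(nat \<Rightarrow> 'a set set) \<Rightarrow> 'a measure set \<Rightarrow> (nat \<Rightarrow> 'a \<Rightarrow> ennreal) \<Rightarrow> bool" where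
  "e_process Fs Ps E \<longleftrightarrow> adapted_to Fs E \<and>
     (\<forall>P\<in>Ps. \<forall>\<tau>. stopping_time_on Fs \<tau> \<longrightarrow> (\<integral>\<^sup>+ \<omega>. stopped_value E \<tau> \<omega> \<partial>P) \<le> 1)"

end

theory Submission
  imports Defs
begin

text \<open>For (i), pick a stopping time \<open>\<tau>\<close> with \<open>A \<subseteq> {\<tau> < \<infinity>}\<close> and
  \<open>sup\<^sub>P P(\<tau> < \<infinity>) < \<mu>\<^sup>*(A) + \<epsilon>\<close>; the process that jumps from \<open>0\<close> to
  \<open>1/(\<mu>\<^sup>*(A) + \<epsilon>)\<close> at time \<open>\<tau>\<close> is dominated by \<open>1/(\<mu>\<^sup>*(A) + \<epsilon>)\<close> times the indicator of
  \<open>{\<tau> < \<infinity>}\<close>, hence an e-process, and it is eventually constant on \<open>A\<close>.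
  For (ii), Ville's inequality: for \<open>0 < a < c\<close> the first time \<open>E\<close> exceeds \<open>a\<close> is a stopping
  time covering \<open>A\<close>, and \<open>E\<close> stopped there is at least \<open>a\<close> on \<open>{\<tau> < \<infinity>}\<close>, so
  \<open>a P(\<tau> < \<infinity>) \<le> 1\<close>. Letting \<open>a \<uparrow> c\<close> gives \<open>\<mu>\<^sup>*(A) \<le> 1/c\<close>.\<close>

lemma ennreal_le_one_divide_iff: "x \<le> 1 / c \<longleftrightarrow> c * x \<le> (1::ennreal)"
proof (cases x c rule: ennreal2_cases)
  case (real_real r q)
  show ?thesis
  proof (cases "q = 0")
    case False
    with real_real have "1 / c = ennreal (1 / q)"
      by (metis divide_ennreal ennreal_1 order_less_le zero_less_one_class.zero_le_one)
    with real_real False show ?thesis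
      by (simp add: ennreal_mult[symmetric] field_simps mult.commute)
  qed (simp add: real_real)
qed (auto simp: ennreal_mult_top ennreal_top_mult ennreal_divide_eq_top_iff top_unique
          split: if_splits)

lemma ennreal_le_one_divide_of_less:
  assumes "\<And>a. 0 < a \<Longrightarrow> a < c \<Longrightarrow> x \<le> 1 / a"
  shows "x \<le> 1 / (c::ennreal)"
proof -
  have "c \<le> 1 / x"
  proof (rule dense_le)
    fix a assume "a < c"
    then show "a \<le> 1 / x"
      using assms[of a]
      by (cases "a = 0") (auto simp: ennreal_le_one_divide_iff mult.commute zero_less_iff_neq_zero)
  qed
  then show ?thesis by (simp add: ennreal_le_one_divide_iff mult.commute)
qed

lemma filtration_on_sets_sigma: "filtration_on Fs \<Longrightarrow> sets (sigma UNIV (Fs t)) = Fs t"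
  unfolding filtration_on_def by (metis sigma_algebra.sets_measure_of_eq)

lemma stopping_time_finite_in_F_inf:
  assumes "stopping_time_on Fs \<tau>"
  shows "{\<omega>. \<tau> \<omega> < \<infinity>} \<in> F_inf Fs"
proof -
  have "{\<omega>. \<tau> \<omega> < \<infinity>} = (\<Union>t. {\<omega>. \<tau> \<omega> \<le> enat t})"
    by (auto dest: enat_ile)
  moreover have "{\<omega>. \<tau> \<omega> \<le> enat t} \<in> sigma_sets UNIV (\<Union>t. Fs t)" for t
    using assms unfolding stopping_time_on_def by (blast intro: sigma_sets.Basic)
  ultimately show ?thesis unfolding F_inf_def by (auto intro: sigma_sets.Union)
qed

lemma stopping_time_finite_in_sets:
  "prob_family Fs Ps \<Longrightarrow> P \<in> Ps \<Longrightarrow> stopping_time_on Fs \<tau> \<Longrightarrow> {\<omega>. \<tau> \<omega> < \<infinity>} \<in> sets P"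
  using stopping_time_finite_in_F_inf unfolding prob_family_def by blast

lemma inverse_capital_le:
  "stopping_time_on Fs \<tau> \<Longrightarrow> A \<subseteq> {\<omega>. \<tau> \<omega> < \<infinity>} \<Longrightarrow>
    inverse_capital Fs Ps A \<le> (SUP P\<in>Ps. emeasure P {\<omega>. \<tau> \<omega> < \<infinity>})"
  unfolding inverse_capital_def by (intro INF_lower) auto

lemma inverse_capital_le_one:
  assumes "filtration_on Fs" "prob_family Fs Ps"
  shows "inverse_capital Fs Ps A \<le> 1"
proof -
  have "stopping_time_on Fs (\<lambda>_. enat 0)"
    using assms(1) unfolding stopping_time_on_def filtration_on_def
    by (metis Collect_const sigma_algebra.sets_measure_of_eq sets.top space_measure_of_conv
        zero_enat_def zero_le)
  then have "inverse_capital Fs Ps A \<le> (SUP P\<in>Ps. emeasure P {\<omega>. enat 0 < \<infinity>})"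
    by (rule inverse_capital_le) simp
  also have "\<dots> \<le> 1"
    using assms(2) unfolding prob_family_def by (auto intro!: SUP_least prob_space.emeasure_le_1)
  finally show ?thesis .
qed

lemma stopped_value_le: "(\<And>t. E t \<omega> \<le> b) \<Longrightarrow> stopped_value E \<tau> \<omega> \<le> b"
  by (cases "\<tau> \<omega>") (auto simp: stopped_value_def intro: Limsup_bounded)

lemma e_process_jump_at_stopping_time:
  assumes fil: "filtration_on Fs" and pf: "prob_family Fs Ps" and st: "stopping_time_on Fs \<tau>"
    and bounded: "\<And>P. P \<in> Ps \<Longrightarrow> c * emeasure P {\<omega>. \<tau> \<omega> < \<infinity>} \<le> 1"
  shows "e_process Fs Ps (\<lambda>t \<omega>. c * indicator {\<omega>. \<tau> \<omega> \<le> enat t} \<omega>)"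
    (is "e_process Fs Ps ?E")
  unfolding e_process_def
proof safe
  show "adapted_to Fs ?E"
    using st filtration_on_sets_sigma[OF fil] unfolding adapted_to_def stopping_time_on_def
    by (auto intro!: borel_measurable_times_ennreal borel_measurable_indicator)
next
  fix P \<sigma> assume P: "P \<in> Ps" and "stopping_time_on Fs \<sigma>"
  have "?E t \<omega> \<le> c * indicator {\<omega>. \<tau> \<omega> < \<infinity>} \<omega>" for t \<omega>
    by (cases "\<tau> \<omega>") (auto simp: indicator_def)
  then have "(\<integral>\<^sup>+ \<omega>. stopped_value ?E \<sigma> \<omega> \<partial>P) \<le> (\<integral>\<^sup>+ \<omega>. c * indicator {\<omega>. \<tau> \<omega> < \<infinity>} \<omega> \<partial>P)"
    by (intro nn_integral_mono stopped_value_le)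
  also have "\<dots> = c * emeasure P {\<omega>. \<tau> \<omega> < \<infinity>}"
    by (intro nn_integral_cmult_indicator stopping_time_finite_in_sets[OF pf P st])
  also have "\<dots> \<le> 1"
    using P by (rule bounded)
  finally show "(\<integral>\<^sup>+ \<omega>. stopped_value ?E \<sigma> \<omega> \<partial>P) \<le> 1" .
qed

lemma e_process_tendsto_inverse_capital:
  assumes fil: "filtration_on Fs" and pf: "prob_family Fs Ps" and "(\<epsilon>::real) > 0"
  shows "\<exists>E. e_process Fs Ps E \<and>
           (\<forall>\<omega>\<in>A. (\<lambda>t. E t \<omega>) \<longlonglongrightarrow> 1 / (inverse_capital Fs Ps A + ennreal \<epsilon>))"
proof -
  define m where "m = inverse_capital Fs Ps A + ennreal \<epsilon>"
  have "inverse_capital Fs Ps A < \<top>"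
    using inverse_capital_le_one[OF fil pf] ennreal_one_less_top by (rule order_le_less_trans)
  moreover have "0 < ennreal \<epsilon>"
    using \<open>\<epsilon> > 0\<close> by simp
  ultimately have m_pos: "0 < m" and m_finite: "m < \<top>" and "inverse_capital Fs Ps A < m"
    unfolding m_def by (auto simp: add_nonneg_pos)
  then obtain \<tau> where st: "stopping_time_on Fs \<tau>" and cover: "A \<subseteq> {\<omega>. \<tau> \<omega> < \<infinity>}"
    and small: "(SUP P\<in>Ps. emeasure P {\<omega>. \<tau> \<omega> < \<infinity>}) < m"
    unfolding inverse_capital_def by (auto simp: INF_less_iff)
  define E where "E = (\<lambda>t \<omega>. 1 / m * indicator {\<omega>. \<tau> \<omega> \<le> enat t} \<omega>)"
  have "1 / m * emeasure P {\<omega>. \<tau> \<omega> < \<infinity>} \<le> 1" if "P \<in> Ps" for P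
  proof -
    have "emeasure P {\<omega>. \<tau> \<omega> < \<infinity>} \<le> m"
      using small SUP_upper[OF that] by (metis less_imp_le order_trans)
    then show ?thesis
      using m_pos m_finite by (simp add: ennreal_le_one_divide_iff[symmetric] divide_right_mono_ennreal)
  qed
  then have "e_process Fs Ps E"
    unfolding E_def by (rule e_process_jump_at_stopping_time[OF fil pf st])
  moreover have "(\<lambda>t. E t \<omega>) \<longlonglongrightarrow> 1 / m" if "\<omega> \<in> A" for \<omega>
  proof -
    from that cover obtain n where "\<tau> \<omega> = enat n" by auto
    then have "\<forall>\<^sub>F t in sequentially. E t \<omega> = 1 / m"
      unfolding eventually_sequentially E_def by (intro exI[of _ n]) (auto simp: indicator_def)
    then show ?thesis by (rule tendsto_eventually)
  qed
  ultimately show ?thesis unfolding m_def by blast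
qed

definition first_exceedance :: "(nat \<Rightarrow> 'a \<Rightarrow> ennreal) \<Rightarrow> ennreal \<Rightarrow> 'a \<Rightarrow> enat" where
  "first_exceedance E a \<omega> = (if \<exists>t. a < E t \<omega> then enat (LEAST t. a < E t \<omega>) else \<infinity>)"

lemma first_exceedance_finite_iff: "first_exceedance E a \<omega> < \<infinity> \<longleftrightarrow> (\<exists>t. a < E t \<omega>)"
  by (simp add: first_exceedance_def)

lemma first_exceedance_le_iff:
  "first_exceedance E a \<omega> \<le> enat t \<longleftrightarrow> (\<exists>s\<le>t. a < E s \<omega>)"
  unfolding first_exceedance_def by (auto intro: LeastI Least_le le_trans)

lemma stopping_time_first_exceedance:
  assumes fil: "filtration_on Fs" and "adapted_to Fs E"
  shows "stopping_time_on Fs (first_exceedance E a)"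
  unfolding stopping_time_on_def
proof
  fix t
  have "{\<omega>. a < E s \<omega>} \<in> Fs t" if "s \<le> t" for s
  proof -
    have "E s \<in> borel_measurable (sigma UNIV (Fs s))"
      using \<open>adapted_to Fs E\<close> unfolding adapted_to_def by blast
    then have "E s -` {a<..} \<inter> space (sigma UNIV (Fs s)) \<in> sets (sigma UNIV (Fs s))"
      by (rule measurable_sets) simp
    then have "{\<omega>. a < E s \<omega>} \<in> Fs s"
      using filtration_on_sets_sigma[OF fil] by (simp add: vimage_def)
    then show ?thesis
      using fil that unfolding filtration_on_def by blast
  qed
  then have "(\<Union>s\<in>{..t}. {\<omega>. a < E s \<omega>}) \<in> sets (sigma UNIV (Fs t))"
    using filtration_on_sets_sigma[OF fil] by (intro sets.finite_UN) auto
  moreover have "{\<omega>. first_exceedance E a \<omega> \<le> enat t} = (\<Union>s\<in>{..t}. {\<omega>. a < E s \<omega>})"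
    by (auto simp: first_exceedance_le_iff)
  ultimately show "{\<omega>. first_exceedance E a \<omega> \<le> enat t} \<in> Fs t"
    using filtration_on_sets_sigma[OF fil] by simp
qed

lemma stopped_value_first_exceedance_ge:
  "a * indicator {\<omega>. first_exceedance E a \<omega> < \<infinity>} \<omega> \<le> stopped_value E (first_exceedance E a) \<omega>"
proof (cases "\<exists>t. a < E t \<omega>")
  case True
  then show ?thesis
    using LeastI_ex[OF True]
    by (simp add: first_exceedance_def stopped_value_def indicator_def less_imp_le)
qed (simp add: first_exceedance_def)

lemma ville_inequality:
  assumes fil: "filtration_on Fs" and pf: "prob_family Fs Ps" and E: "e_process Fs Ps E"
    and P: "P \<in> Ps"
  shows "a * emeasure P {\<omega>. first_exceedance E a \<omega> < \<infinity>} \<le> 1"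
proof -
  have st: "stopping_time_on Fs (first_exceedance E a)"
    using E by (intro stopping_time_first_exceedance[OF fil]) (simp add: e_process_def)
  have "a * emeasure P {\<omega>. first_exceedance E a \<omega> < \<infinity>}
      = (\<integral>\<^sup>+ \<omega>. a * indicator {\<omega>. first_exceedance E a \<omega> < \<infinity>} \<omega> \<partial>P)"
    by (intro nn_integral_cmult_indicator[symmetric] stopping_time_finite_in_sets[OF pf P st])
  also have "\<dots> \<le> (\<integral>\<^sup>+ \<omega>. stopped_value E (first_exceedance E a) \<omega> \<partial>P)"
    by (intro nn_integral_mono stopped_value_first_exceedance_ge)
  also have "\<dots> \<le> 1"
    using E P st unfolding e_process_def by blast
  finally show ?thesis .
qed

lemma inverse_capital_le_of_e_process:
  assumes fil: "filtration_on Fs" and pf: "prob_family Fs Ps" and E: "e_process Fs Ps E"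
    and large: "\<forall>\<omega>\<in>A. (SUP t. E t \<omega>) \<ge> c"
  shows "inverse_capital Fs Ps A \<le> 1 / c"
proof (rule ennreal_le_one_divide_of_less)
  fix a assume "0 < a" "a < c"
  have "A \<subseteq> {\<omega>. first_exceedance E a \<omega> < \<infinity>}"
  proof
    fix \<omega> assume "\<omega> \<in> A"
    with large \<open>a < c\<close> have "a < (SUP t. E t \<omega>)"
      by (blast intro: order.strict_trans2)
    then show "\<omega> \<in> {\<omega>. first_exceedance E a \<omega> < \<infinity>}"
      unfolding mem_Collect_eq first_exceedance_finite_iff by (simp add: less_SUP_iff)
  qed
  then have "inverse_capital Fs Ps A \<le> (SUP P\<in>Ps. emeasure P {\<omega>. first_exceedance E a \<omega> < \<infinity>})"
    using E by (intro inverse_capital_le stopping_time_first_exceedance[OF fil])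
      (simp_all add: e_process_def)
  also have "\<dots> \<le> 1 / a"
    using ville_inequality[OF fil pf E]
    by (intro SUP_least) (simp add: ennreal_le_one_divide_iff)
  finally show "inverse_capital Fs Ps A \<le> 1 / a" .
qed

theorem mainTheorem4:
  fixes Fs :: "nat \<Rightarrow> 'a set set" and Ps :: "'a measure set" and A :: "'a set"
  assumes "filtration_on Fs" and "prob_family Fs Ps"
  shows "(\<forall>\<epsilon>::real. \<epsilon> > 0 \<longrightarrow>
            (\<exists>E. e_process Fs Ps E \<and>
               (\<forall>\<omega>\<in>A. (\<lambda>t. E t \<omega>) \<longlonglongrightarrow> 1 / (inverse_capital Fs Ps A + ennreal \<epsilon>))))
       \<and> (\<forall>c::ennreal. c \<ge> 1 \<longrightarrow>
            (\<exists>E. e_process Fs Ps E \<and> (\<forall>\<omega>\<in>A. (SUP t. E t \<omega>) \<ge> c))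
            \<longrightarrow> inverse_capital Fs Ps A \<le> 1 / c)"
  using e_process_tendsto_inverse_capital[OF assms] inverse_capital_le_of_e_process[OF assms]
  by blast

end
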